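(* In $V_q$, the element $\Omega=\sum_{n=0}^{r-2}(-1)^n\epsilon_{n+1}e_n^2$ satisfies $$\Omega=-P_{r-1}'(e_1)\,P_{r-2}(e_1)=-\iota\,P'_{r-1}(e_1),$$ where $\iota=e_{r-2}$. Moreover $\Omega=2\Omega^+$, where $\Omega^+=\sum_{n=0}^{(r-3)/2}\epsilon_{2n+1}e_{2n}^2\in V_q^+$.
   Context: Let $r\ge 3$ and $s$ be coprime odd integers with $0<s<r$, $q=\exp(i\pi s/r)$. For an integer $n$ put $[n]=\frac{q^n-q^{-n}}{q-q^{-1}}$, $[n]!=[n][n-1]\cdots[1]$, and for $1\le n\le r-1$ let $\epsilon_n=\operatorname{sign}[n]=(-1)^{\lfloor ns/r\rfloor}$ (so $\epsilon_1=1$ and $\epsilon_n=\epsilon_{r-n}$). A triple $(i,j,k)\in\{0,\dots,r-2\}^3$ is $r$-admissible if $i\le j+k$, $j\le i+k$, $k\le i+j$, $i+j+k$ is even and $i+j+k\le 2r-4$; for such a triple write $i=b+c$, $j=a+c$, $k=a+b$ and set $\langle i,j,k\rangle=(-1)^{a+b+c}\frac{[a+b+c+1]![a]![b]![c]!}{[a+b]![a+c]![b+c]!}$. Let $V_q$ be the $\mathbb{Q}$-vector space with basis $e_0,\dots,e_{r-2}$, with the symmetric bilinear form $\eta$ for which this basis is orthogonal and $\eta(e_i,e_i)=(-1)^i\epsilon_{i+1}$, and the symmetric trilinear form $\omega$ with $\omega(e_i,e_j,e_k)=\operatorname{sign}\langle i,j,k\rangle$ if $(i,j,k)$ is $r$-admissible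 and $0$ otherwise. The product on $V_q$ is defined by $\eta(x\cdot y,z)=\omega(x,y,z)$, giving a commutative associative unital algebra with unit $e_0$; $V_q^+$ is the subalgebra spanned by $e_0,e_2,\dots,e_{r-3}$. For a Frobenius algebra with orthogonal basis $(f_i)$ the element $\Omega$ is $\sum_i f_i^2/\eta(f_i,f_i)$; the displayed $\Omega,\Omega^+$ are these elements for $V_q$ and $V_q^+$. Define $P_n\in\mathbb{Z}[X]$ by $P_0=1$, $P_1=X$, $P_{n+1}=XP_n+\epsilon_n\epsilon_{n+1}P_{n-1}$ for $1\le n\le r-2$. *)

theory Defs
  imports Complex_Main "HOL-Computational_Algebra.Polynomial"
begin

text \<open>Elements of V_q are represented by coefficient functions nat \<Rightarrow> rat w.r.t. e_0,...,e_{r-2}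
(coefficients at indices > r-2 are irrelevant/zero).\<close>

definition qq :: "nat \<Rightarrow> nat \<Rightarrow> complex" where
  "qq r s = exp (\<i> * of_real pi * of_nat s / of_nat r)"

definition qint :: "nat \<Rightarrow> nat \<Rightarrow> int \<Rightarrow> complex" where
  "qint r s n = (qq r s powi n - qq r s powi (-n)) / (qq r s - inverse (qq r s))"

definition qfact :: "nat \<Rightarrow> nat \<Rightarrow> nat \<Rightarrow> complex" where
  "qfact r s n = (\<Prod>m\<in>{1..n}. qint r s (int m))"

definition eps :: "nat \<Rightarrow> nat \<Rightarrow> nat \<Rightarrow> int" where
  "eps r s n = (-1) ^ nat \<lfloor>real (n * s) / real r\<rfloor>"

definition admissible :: "nat \<Rightarrow> nat \<Rightarrow> nat \<Rightarrow> nat \<Rightarrow> bool" where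
  "admissible r i j k \<longleftrightarrow> i \<le> r - 2 \<and> j \<le> r - 2 \<and> k \<le> r - 2 \<and>
     i \<le> j + k \<and> j \<le> i + k \<and> k \<le> i + j \<and> even (i + j + k) \<and> i + j + k \<le> 2 * r - 4"

text \<open>theta-symbol \<langle>i,j,k\<rangle> with i = b+c, j = a+c, k = a+b\<close>
definition theta :: "nat \<Rightarrow> nat \<Rightarrow> nat \<Rightarrow> nat \<Rightarrow> nat \<Rightarrow> complex" where
  "theta r s i j k = (let a = (j + k - i) div 2; b = (i + k - j) div 2; c = (i + j - k) div 2 in
     (-1) ^ (a + b + c) * qfact r s (a + b + c + 1) * qfact r s a * qfact r s b * qfact r s c
     / (qfact r s (a + b) * qfact r s (a + c) * qfact r s (b + c)))"

definition rsgn :: "real \<Rightarrow> rat" where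
  "rsgn x = (if x > 0 then 1 else if x < 0 then -1 else 0)"

text \<open>\<omega>(e_i,e_j,e_k); the theta-symbol is a real number, its sign is that of its real part\<close>
definition omega :: "nat \<Rightarrow> nat \<Rightarrow> nat \<Rightarrow> nat \<Rightarrow> nat \<Rightarrow> rat" where
  "omega r s i j k = (if admissible r i j k then rsgn (Re (theta r s i j k)) else 0)"

definition eta :: "nat \<Rightarrow> nat \<Rightarrow> nat \<Rightarrow> rat" where
  "eta r s i = (-1) ^ i * of_int (eps r s (i + 1))"

definition basis :: "nat \<Rightarrow> nat \<Rightarrow> rat" where
  "basis n = (\<lambda>k. if k = n then 1 else 0)"

text \<open>product determined by \<eta>(x\<cdot>y, e_k) = \<omega>(x,y,e_k)\<close>
definition vmult :: "nat \<Rightarrow> nat \<Rightarrow> (nat \<Rightarrow> rat) \<Rightarrow> (nat \<Rightarrow> rat) \<Rightarrow> (nat \<Rightarrow> rat)" where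
  "vmult r s x y = (\<lambda>k. if k \<le> r - 2 then
      (\<Sum>i\<le>r - 2. \<Sum>j\<le>r - 2. x i * y j * omega r s i j k) / eta r s k else 0)"

definition vadd :: "(nat \<Rightarrow> rat) \<Rightarrow> (nat \<Rightarrow> rat) \<Rightarrow> (nat \<Rightarrow> rat)" where
  "vadd x y = (\<lambda>k. x k + y k)"

definition vscale :: "rat \<Rightarrow> (nat \<Rightarrow> rat) \<Rightarrow> (nat \<Rightarrow> rat)" where
  "vscale c x = (\<lambda>k. c * x k)"

definition vsum :: "('a \<Rightarrow> nat \<Rightarrow> rat) \<Rightarrow> 'a set \<Rightarrow> (nat \<Rightarrow> rat)" where
  "vsum f A = (\<lambda>k. \<Sum>a\<in>A. f a k)"

fun vpow :: "nat \<Rightarrow> nat \<Rightarrow> (nat \<Rightarrow> rat) \<Rightarrow> nat \<Rightarrow> (nat \<Rightarrow> rat)" where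
  "vpow r s x 0 = basis 0"
| "vpow r s x (Suc n) = vmult r s x (vpow r s x n)"

definition peval :: "nat \<Rightarrow> nat \<Rightarrow> int poly \<Rightarrow> (nat \<Rightarrow> rat) \<Rightarrow> (nat \<Rightarrow> rat)" where
  "peval r s p x = vsum (\<lambda>k. vscale (of_int (coeff p k)) (vpow r s x k)) {..degree p}"

fun Ppoly :: "nat \<Rightarrow> nat \<Rightarrow> nat \<Rightarrow> int poly" where
  "Ppoly r s 0 = 1"
| "Ppoly r s (Suc 0) = [:0, 1:]"
| "Ppoly r s (Suc (Suc n)) =
     [:0, 1:] * Ppoly r s (Suc n) + smult (eps r s (Suc n) * eps r s (Suc (Suc n))) (Ppoly r s n)"

definition Omega :: "nat \<Rightarrow> nat \<Rightarrow> nat \<Rightarrow> rat" where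
  "Omega r s = vsum (\<lambda>n. vscale ((-1) ^ n * of_int (eps r s (n + 1)))
                      (vmult r s (basis n) (basis n))) {0..r - 2}"

definition OmegaPlus :: "nat \<Rightarrow> nat \<Rightarrow> nat \<Rightarrow> rat" where
  "OmegaPlus r s = vsum (\<lambda>n. vscale (of_int (eps r s (2 * n + 1)))
                      (vmult r s (basis (2 * n)) (basis (2 * n)))) {0..(r - 3) div 2}"

end

theory Submission
  imports Defs
begin

text \<open>
With \<open>\<theta> = \<pi>s/r\<close> one has \<open>[n] = sin(n\<theta>)/sin \<theta>\<close>, whose sign for \<open>0 < n < r\<close> is \<open>\<epsilon>\<^sub>n\<close>.
Hence the structure constants of \<open>V\<^sub>q\<close> in the basis \<open>e\<^sub>n\<close> are explicit products of signs, and the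
addition formula \<open>sin(z+u) sin(z+v) = sin u sin v + sin z sin(z+u+v)\<close> turns into the three-term
relation \<open>e\<^sub>n\<^sub>+\<^sub>1 = e\<^sub>1 e\<^sub>n + \<epsilon>\<^sub>n\<epsilon>\<^sub>n\<^sub>+\<^sub>1 e\<^sub>n\<^sub>-\<^sub>1\<close>, the recursion defining \<open>P\<^sub>n\<close>. So \<open>e\<^sub>n = P\<^sub>n(e\<^sub>1)\<close> and
\<open>e\<^sub>r\<^sub>-\<^sub>1 = 0\<close>. With \<open>D\<^sub>n = P\<^sub>n'(e\<^sub>1)\<close> the partial sums of \<open>\<Omega>\<close> telescope,
\<open>\<Sum>\<^sub>k\<^sub>\<le>\<^sub>n \<eta>\<^sub>k e\<^sub>k\<^sup>2 = \<eta>\<^sub>n (e\<^sub>n D\<^sub>n\<^sub>+\<^sub>1 - e\<^sub>n\<^sub>+\<^sub>1 D\<^sub>n)\<close>, which at \<open>n = r - 2\<close> is \<open>-\<iota> P'\<^sub>r\<^sub>-\<^sub>1(e\<^sub>1)\<close>.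
Finally, the reflection \<open>\<epsilon>\<^sub>r\<^sub>-\<^sub>n = \<epsilon>\<^sub>n\<close> makes \<open>\<eta>\<^sub>k e\<^sub>k\<^sup>2\<close> invariant under \<open>k \<mapsto> r - 2 - k\<close>, which
exchanges odd and even indices because \<open>r\<close> is odd.
\<close>

section \<open>Signs\<close>

lemma eps_mult_self: "eps r s n * eps r s n = 1"
  unfolding eps_def by (simp flip: power_add)

lemma eps_cases: "eps r s n = 1 \<or> eps r s n = -1"
  unfolding eps_def by (cases "even (nat \<lfloor>real (n * s) / real r\<rfloor>)") auto

lemma rsgn_eq_of_int:
  assumes "sgn x = of_int w"
  shows "rsgn x = of_int w"
proof -
  have "x > 0 \<Longrightarrow> w = 1" "x < 0 \<Longrightarrow> w = -1" "x = 0 \<Longrightarrow> w = 0"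
    using assms by (auto simp: sgn_real_def split: if_splits)
  then show ?thesis unfolding rsgn_def by (cases "x > 0"; cases "x < 0") auto
qed

lemma sgn_add_eq: "sgn x = sgn y \<Longrightarrow> sgn (x + y) = sgn x" for x y :: real
  by (auto simp: sgn_real_def split: if_splits)

lemma sin_add_mult_sin_add:
  "sin (z + u) * sin (z + v) = sin u * sin v + sin z * sin (z + u + v)" for u v z :: real
proof -
  have "cos (- u - v) = cos (u + v)" using cos_minus[of "u + v"] by simp
  then show ?thesis by (simp add: sin_times_sin algebra_simps diff_divide_distrib add_divide_distrib)
qed

lemma of_int_divide_square_one:
  assumes "e * e = 1"
  shows "(of_int w :: 'a :: field) / of_int e = of_int (w * e)"
proof -
  have "of_int (w * e) * (of_int e :: 'a) = of_int w"
    by (simp only: of_int_mult[symmetric] mult.assoc assms mult_1_right)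
  moreover have "e \<noteq> 0" using assms by auto
  ultimately show ?thesis by (simp add: divide_eq_eq)
qed

lemma mult_cancel_square_one: "(k::int) * k = 1 \<Longrightarrow> k * x = k * y \<Longrightarrow> x = y"
  by (metis mult.assoc mult_1)

locale Vq_params =
  fixes r s :: nat
  assumes r_ge_3: "3 \<le> r" and odd_r: "odd r" and odd_s: "odd s" and coprime_rs: "coprime r s"
    and s_pos: "0 < s" and s_less_r: "s < r"
begin

abbreviation \<epsilon> :: "nat \<Rightarrow> int" where "\<epsilon> \<equiv> eps r s"

abbreviation lam :: "nat \<Rightarrow> int" where "lam n \<equiv> \<epsilon> n * \<epsilon> (Suc n)"

definition \<theta> :: real where "\<theta> = pi * real s / real r"

lemma sin_\<theta>_pos: "sin \<theta> > 0"
  unfolding \<theta>_def by (rule sin_gt_zero) (use s_pos s_less_r in \<open>auto simp: field_simps\<close>)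

lemma sgn_sin_mult_\<theta>:
  assumes "1 \<le> n" "n < r"
  shows "sgn (sin (real n * \<theta>)) = of_int (\<epsilon> n)"
proof -
  define q where "q = n * s div r"
  define t where "t = n * s mod r"
  have ns: "n * s = r * q + t" unfolding q_def t_def by simp
  have "t \<noteq> 0"
  proof
    assume "t = 0"
    then have "r dvd n" using coprime_rs by (auto simp: t_def coprime_dvd_mult_left_iff)
    then show False using assms by (auto dest: dvd_imp_le)
  qed
  moreover have "t < r" unfolding t_def using r_ge_3 by simp
  ultimately have sin_t: "sin (pi * real t / real r) > 0"
    by (intro sin_gt_zero) (auto simp: field_simps)
  have "real n * \<theta> = real q * pi + pi * real t / real r"
  proof -
    have "real n * \<theta> = pi * (real r * real q + real t) / real r"
      unfolding \<theta>_def by (simp flip: of_nat_mult of_nat_add ns)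
    then show ?thesis using r_ge_3 by (simp add: field_simps)
  qed
  then have "sin (real n * \<theta>) = (-1) ^ q * sin (pi * real t / real r)"
    by (simp add: sin_add)
  moreover have "nat \<lfloor>real (n * s) / real r\<rfloor> = q"
    unfolding q_def by (metis floor_divide_of_nat_eq nat_int)
  ultimately show ?thesis using sin_t by (simp add: eps_def sgn_mult)
qed

lemma eps_1: "\<epsilon> 1 = 1"
proof -
  have "\<lfloor>real s / real r\<rfloor> = 0" using s_less_r s_pos by (simp add: floor_eq_iff)
  then show ?thesis unfolding eps_def by simp
qed

text \<open>The reflection \<open>(r - n)\<theta> = s\<pi> - n\<theta>\<close> preserves the sine because \<open>s\<close> is odd.\<close>

lemma eps_reflect:
  assumes "1 \<le> n" "n < r"
  shows "\<epsilon> (r - n) = \<epsilon> n"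
proof -
  have "real (r - n) * \<theta> = pi * real s - real n * \<theta>"
    using assms unfolding \<theta>_def by (simp add: field_simps)
  then have "sin (real (r - n) * \<theta>) = sin (real n * \<theta>)"
    using odd_s by (simp add: sin_diff)
  then show ?thesis using sgn_sin_mult_\<theta>[of "r - n"] sgn_sin_mult_\<theta>[of n] assms by simp
qed

lemma eps_r_minus_1: "\<epsilon> (r - 1) = 1"
  using eps_reflect[of 1] eps_1 r_ge_3 by simp

text \<open>Signs in \<open>sin_add_mult_sin_add\<close> at multiples of \<open>\<theta>\<close>: if the two products on the right have
the same sign then \<open>\<epsilon>(z + u) \<epsilon>(z + v) = \<epsilon> u \<epsilon> v\<close>, otherwise both sides vanish.\<close>

lemma eps_addition_formula:
  assumes "1 \<le> u" "1 \<le> v" "1 \<le> z" "z + u + v < r"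
  shows "\<epsilon> (z + u) * \<epsilon> (z + v) * (1 + \<epsilon> u * \<epsilon> v * \<epsilon> z * \<epsilon> (z + u + v))
           = \<epsilon> u * \<epsilon> v + \<epsilon> z * \<epsilon> (z + u + v)"
proof -
  let ?S = "\<lambda>n. sin (real n * \<theta>)"
  have sg: "sgn (?S u) = of_int (\<epsilon> u)" "sgn (?S v) = of_int (\<epsilon> v)" "sgn (?S z) = of_int (\<epsilon> z)"
    "sgn (?S (z + u)) = of_int (\<epsilon> (z + u))" "sgn (?S (z + v)) = of_int (\<epsilon> (z + v))"
    "sgn (?S (z + u + v)) = of_int (\<epsilon> (z + u + v))"
    using assms by (intro sgn_sin_mult_\<theta>; simp)+
  have "\<epsilon> (z + u) * \<epsilon> (z + v) = \<epsilon> u * \<epsilon> v" if same: "\<epsilon> u * \<epsilon> v = \<epsilon> z * \<epsilon> (z + u + v)"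
  proof -
    have uv: "sgn (?S u * ?S v) = of_int (\<epsilon> u * \<epsilon> v)" by (simp only: sgn_mult sg of_int_mult)
    have "?S (z + u) * ?S (z + v) = ?S u * ?S v + ?S z * ?S (z + u + v)"
      using sin_add_mult_sin_add[of "real z * \<theta>" "real u * \<theta>" "real v * \<theta>"]
      by (simp add: algebra_simps)
    also have "sgn \<dots> = sgn (?S u * ?S v)"
      by (rule sgn_add_eq) (simp only: sgn_mult sg same flip: of_int_mult)
    finally show ?thesis by (simp only: sgn_mult sg uv flip: of_int_mult of_int_eq_iff)
  qed
  then show ?thesis
    using eps_cases[of r s u] eps_cases[of r s v] eps_cases[of r s z] eps_cases[of r s "z + u + v"]
      eps_cases[of r s "z + u"] eps_cases[of r s "z + v"]
    by auto
qed

definition eps_prod :: "nat \<Rightarrow> int" where "eps_prod n = (\<Prod>m\<in>{1..n}. \<epsilon> m)"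

lemma eps_prod_0 [simp]: "eps_prod 0 = 1"
  by (simp add: eps_prod_def)

lemma eps_prod_Suc: "eps_prod (Suc n) = eps_prod n * \<epsilon> (Suc n)"
  unfolding eps_prod_def by (simp add: prod.nat_ivl_Suc' mult.commute)

lemma eps_prod_mult_self: "eps_prod n * eps_prod n = 1"
  by (induction n) (simp_all add: eps_prod_Suc algebra_simps eps_mult_self)

lemma eps_prod_reflect: "x \<le> r - 1 \<Longrightarrow> eps_prod (r - 1 - x) = eps_prod (r - 1) * eps_prod x"
proof (induction x)
  case (Suc x)
  define y where "y = r - 1 - Suc x"
  have y: "r - 1 - x = Suc y" "Suc y = r - Suc x" using Suc.prems unfolding y_def by simp_all
  have "\<epsilon> (Suc y) = \<epsilon> (Suc x)" unfolding y(2) by (rule eps_reflect) (use Suc.prems in simp_all)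
  moreover have "eps_prod (Suc y) = eps_prod (r - 1) * eps_prod x"
    using Suc by (simp only: y(1)[symmetric])
  ultimately have "eps_prod y * \<epsilon> (Suc x) = eps_prod (r - 1) * eps_prod x"
    by (simp add: eps_prod_Suc)
  then have "eps_prod y = eps_prod (r - 1) * eps_prod x * \<epsilon> (Suc x)"
    by (metis eps_mult_self mult.assoc mult.right_neutral)
  then show ?case by (simp add: y_def eps_prod_Suc mult.assoc)
qed simp

lemma sign_cancel:
  "\<epsilon> n * (\<epsilon> n * y) = y" "eps_prod n * (eps_prod n * y) = y" "(-1::int) ^ n * ((-1) ^ n * y) = y"
  "\<epsilon> n * \<epsilon> n = 1" "eps_prod n * eps_prod n = 1" "(-1::int) ^ n * (-1) ^ n = 1"
  by (simp_all add: mult.assoc[symmetric] eps_mult_self eps_prod_mult_self flip: power_add)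

end

section \<open>The trilinear form as a product of signs\<close>

context Vq_params
begin

lemma qq_eq_cis: "qq r s = cis \<theta>"
  unfolding qq_def \<theta>_def cis_conv_exp by (simp add: field_simps)

lemma qint_of_nat: "qint r s (int n) = complex_of_real (sin (real n * \<theta>) / sin \<theta>)"
proof -
  have cis_diff: "cis x - cis (- x) = complex_of_real (2 * sin x) * \<i>" for x
    by (simp add: complex_eq_iff)
  have "qint r s (int n) = (complex_of_real (2 * sin (real n * \<theta>)) * \<i>) / (complex_of_real (2 * sin \<theta>) * \<i>)"
    unfolding qint_def qq_eq_cis cis_diff[symmetric]
    by (simp add: cis_power_int DeMoivre power_int_minus)
  then show ?thesis by (simp add: field_simps)
qed

definition real_qfact :: "nat \<Rightarrow> real" where
  "real_qfact n = (\<Prod>m\<in>{1..n}. sin (real m * \<theta>) / sin \<theta>)"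

lemma qfact_eq_real_qfact: "qfact r s n = complex_of_real (real_qfact n)"
  unfolding qfact_def real_qfact_def by (simp add: qint_of_nat)

lemma sgn_real_qfact: "n < r \<Longrightarrow> sgn (real_qfact n) = of_int (eps_prod n)"
proof (induction n)
  case (Suc n)
  have "real_qfact (Suc n) = real_qfact n * (sin (real (Suc n) * \<theta>) / sin \<theta>)"
    unfolding real_qfact_def by (simp add: prod.nat_ivl_Suc')
  then show ?case using Suc sgn_sin_mult_\<theta>[of "Suc n"] sin_\<theta>_pos
    by (simp add: sgn_mult eps_prod_Suc)
qed (simp add: real_qfact_def)

lemma admissible_param_iff: "admissible r (b + c) (a + c) (a + b) \<longleftrightarrow> a + b + c \<le> r - 2"
  unfolding admissible_def by auto

lemma admissibleE:
  assumes "admissible r i j k"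
  obtains a b c where "i = b + c" "j = a + c" "k = a + b" "a + b + c \<le> r - 2"
proof -
  from assms have tri: "i \<le> j + k" "j \<le> i + k" "k \<le> i + j" and "even (i + j + k)"
    unfolding admissible_def by auto
  then obtain m where "i + j + k = 2 * m" by (elim evenE)
  with tri have "i = (m - j) + (m - k)" "j = (m - i) + (m - k)" "k = (m - i) + (m - j)"
    by linarith+
  then show ?thesis using that assms admissible_param_iff by metis
qed

lemma omega_param:
  assumes "a + b + c \<le> r - 2"
  shows "omega r s (b + c) (a + c) (a + b) = of_int ((-1) ^ (a + b + c) * eps_prod (a + b + c + 1)
    * eps_prod a * eps_prod b * eps_prod c * eps_prod (a + b) * eps_prod (a + c) * eps_prod (b + c))"
proof -
  have halves: "(a + c + (a + b) - (b + c)) div 2 = a" "(b + c + (a + b) - (a + c)) div 2 = b"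
    "(b + c + (a + c) - (a + b)) div 2 = c"
    by (simp_all add: add.commute add.left_commute flip: mult_2)
  have sg: "sgn (real_qfact n) = of_int (eps_prod n)" if "n \<le> a + b + c + 1" for n
    using sgn_real_qfact that assms r_ge_3 by simp
  have theta: "theta r s (b + c) (a + c) (a + b) = complex_of_real ((-1) ^ (a + b + c)
     * real_qfact (a + b + c + 1) * real_qfact a * real_qfact b * real_qfact c
     / (real_qfact (a + b) * real_qfact (a + c) * real_qfact (b + c)))"
    unfolding theta_def Let_def halves qfact_eq_real_qfact by simp
  have "sgn ((-1::real) ^ (a + b + c)) = (-1) ^ (a + b + c)" by (cases "even (a + b + c)") auto
  then have "sgn ((-1) ^ (a + b + c) * real_qfact (a + b + c + 1) * real_qfact a * real_qfact b
      * real_qfact c / (real_qfact (a + b) * real_qfact (a + c) * real_qfact (b + c)))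
    = of_int ((-1) ^ (a + b + c) * eps_prod (a + b + c + 1) * eps_prod a * eps_prod b * eps_prod c)
      / of_int (eps_prod (a + b) * eps_prod (a + c) * eps_prod (b + c))"
    by (simp only: sgn_divide sgn_mult sg of_int_mult of_int_power of_int_minus of_int_1)
  also have "\<dots> = of_int ((-1) ^ (a + b + c) * eps_prod (a + b + c + 1) * eps_prod a * eps_prod b
      * eps_prod c * eps_prod (a + b) * eps_prod (a + c) * eps_prod (b + c))"
    by (subst of_int_divide_square_one) (simp_all add: ac_simps sign_cancel)
  finally have "rsgn (Re (theta r s (b + c) (a + c) (a + b))) = of_int ((-1) ^ (a + b + c)
      * eps_prod (a + b + c + 1) * eps_prod a * eps_prod b * eps_prod c * eps_prod (a + b)
      * eps_prod (a + c) * eps_prod (b + c))"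
    unfolding theta Re_complex_of_real by (rule rsgn_eq_of_int)
  then show ?thesis using assms by (simp add: omega_def admissible_param_iff)
qed

end

section \<open>Structure constants\<close>

context Vq_params
begin

text \<open>The closed form of \<open>\<omega>(e\<^sub>i, e\<^sub>j, e\<^sub>k) / \<eta>(e\<^sub>k, e\<^sub>k)\<close>, the coefficient of \<open>e\<^sub>k\<close> in \<open>e\<^sub>i e\<^sub>j\<close>.\<close>

definition struct_const :: "nat \<Rightarrow> nat \<Rightarrow> nat \<Rightarrow> int" where
  "struct_const i j k = (if admissible r i j k then
     (let a = (j + k - i) div 2; b = (i + k - j) div 2; c = (i + j - k) div 2 in
      (-1) ^ (a + b + c + k) * eps_prod (a + b + c + 1) * eps_prod a * eps_prod b * eps_prod c
      * eps_prod i * eps_prod j * eps_prod (k + 1))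
   else 0)"

lemma struct_const_param: "struct_const (b + c) (a + c) (a + b) = (if a + b + c \<le> r - 2 then
   (-1) ^ (a + b + c + (a + b)) * eps_prod (a + b + c + 1) * eps_prod a * eps_prod b * eps_prod c
   * eps_prod (b + c) * eps_prod (a + c) * eps_prod (a + b + 1) else 0)"
proof -
  have "(a + c + (a + b) - (b + c)) div 2 = a" "(b + c + (a + b) - (a + c)) div 2 = b"
    "(b + c + (a + c) - (a + b)) div 2 = c"
    by (simp_all add: add.commute add.left_commute flip: mult_2)
  then show ?thesis unfolding struct_const_def admissible_param_iff Let_def by simp
qed

lemma struct_const_eq_0: "\<not> admissible r i j k \<Longrightarrow> struct_const i j k = 0"
  unfolding struct_const_def by simp

lemma struct_const_eq_0_triangle:
  "j + k < i \<Longrightarrow> struct_const i j k = 0" "i + k < j \<Longrightarrow> struct_const i j k = 0"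
  "i + j < k \<Longrightarrow> struct_const i j k = 0"
  by (auto intro: struct_const_eq_0 simp: admissible_def)

lemma struct_const_eq_0_odd: "odd (i + j + k) \<Longrightarrow> struct_const i j k = 0"
  by (rule struct_const_eq_0) (auto simp: admissible_def)

lemma struct_const_eq_0_large:
  "r - 2 < i \<Longrightarrow> struct_const i j k = 0" "r - 2 < j \<Longrightarrow> struct_const i j k = 0"
  "r - 2 < k \<Longrightarrow> struct_const i j k = 0"
  by (auto intro: struct_const_eq_0 simp: admissible_def)

lemma struct_const_param_eq_0: "r - 2 < a + b + c \<Longrightarrow> struct_const (b + c) (a + c) (a + b) = 0"
  by (simp add: struct_const_param)

lemma omega_div_eta: "omega r s i j k / eta r s k = of_int (struct_const i j k)"
proof (cases "admissible r i j k")
  case True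
  then obtain a b c where abc: "i = b + c" "j = a + c" "k = a + b" "a + b + c \<le> r - 2"
    by (rule admissibleE)
  have eta_eq: "eta r s (a + b) = of_int ((-1) ^ (a + b) * \<epsilon> (a + b + 1))" by (simp add: eta_def)
  have "((-1) ^ (a + b) * \<epsilon> (a + b + 1)) * ((-1) ^ (a + b) * \<epsilon> (a + b + 1)) = 1"
    by (simp add: ac_simps sign_cancel)
  then have "omega r s i j k / eta r s k = of_int ((-1) ^ (a + b + c) * eps_prod (a + b + c + 1)
      * eps_prod a * eps_prod b * eps_prod c * eps_prod (a + b) * eps_prod (a + c) * eps_prod (b + c)
      * ((-1) ^ (a + b) * \<epsilon> (a + b + 1)))"
    unfolding eta_eq abc(1-3) omega_param[OF abc(4)] by (rule of_int_divide_square_one)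
  also have "\<dots> = of_int (struct_const i j k)"
    unfolding abc(1-3) struct_const_param using abc(4)
    by (simp add: eps_prod_Suc power_add ac_simps)
  finally show ?thesis .
qed (simp add: omega_def struct_const_eq_0)

lemma vmult_basis: "vmult r s (basis n) y k =
    (if k \<le> r - 2 then (\<Sum>j\<le>r - 2. y j * of_int (struct_const n j k)) else 0)"
proof (cases "k \<le> r - 2 \<and> n \<le> r - 2")
  case True
  then have "vmult r s (basis n) y k = (\<Sum>j\<le>r - 2. y j * omega r s n j k) / eta r s k"
    unfolding vmult_def basis_def
    by (simp add: if_distrib[of "\<lambda>x. x * _"] cong: if_cong, subst sum.swap, simp)
  then show ?thesis
    using True by (simp add: sum_divide_distrib flip: omega_div_eta)
qed (auto simp: vmult_def basis_def struct_const_eq_0_large)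

lemma struct_const_0_left: "struct_const 0 j k = (if j = k \<and> k \<le> r - 2 then 1 else 0)"
proof (cases "j = k \<and> k \<le> r - 2")
  case True
  then have "struct_const 0 j k = struct_const (0 + 0) (k + 0) (k + 0)" by simp
  also have "\<dots> = 1" using True by (simp only: struct_const_param) (simp add: eps_prod_Suc sign_cancel ac_simps)
  finally show ?thesis using True by simp
next
  case False
  then consider "k < j" | "j < k" | "r - 2 < k" by linarith
  then show ?thesis using False by cases (simp_all add: struct_const_eq_0_triangle struct_const_eq_0_large)
qed

lemma struct_const_1_left:
  assumes "m \<le> r - 2" "j \<le> r - 2"
  shows "struct_const 1 j m = (if j + 1 = m then 1 else if j = m + 1 then - lam (Suc m) else 0)"
proof -
  consider "j + 1 = m" | "j = m + 1" | "j + 1 \<noteq> m" "j \<noteq> m + 1" by blast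
  then show ?thesis
  proof cases
    case 1
    have "struct_const (1 + 0) (j + 0) (j + 1) = 1"
      using 1 assms by (subst struct_const_param) (simp add: eps_prod_Suc sign_cancel ac_simps)
    then show ?thesis using 1 by simp
  next
    case 2
    have "struct_const (0 + 1) (m + 1) (m + 0) = - lam (Suc m)"
      using 2 assms by (subst struct_const_param) (simp add: eps_prod_Suc sign_cancel ac_simps)
    then show ?thesis using 2 by simp
  next
    case 3
    have "struct_const 1 j m = 0"
    proof (cases "even (1 + j + m)")
      case True
      then have "j \<noteq> m" by auto
      then have "1 + m < j \<or> 1 + j < m" using 3 by linarith
      then show ?thesis by (auto intro: struct_const_eq_0_triangle)
    qed (simp add: struct_const_eq_0_odd)
    then show ?thesis using 3 by simp
  qed
qed

end

text \<open>
The structure constants satisfy the three-term relation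
\<open>e\<^sub>n\<^sub>+\<^sub>1 e\<^sub>j = e\<^sub>1(e\<^sub>n e\<^sub>j) + \<epsilon>\<^sub>n\<epsilon>\<^sub>n\<^sub>+\<^sub>1 e\<^sub>n\<^sub>-\<^sub>1 e\<^sub>j\<close>. For \<open>n + j + m\<close> odd and within the triangle inequalities
write \<open>n + 1 = z + v\<close>, \<open>j + 1 = u + v\<close>, \<open>m + 1 = z + u\<close>. If one of \<open>u, v, z\<close> vanishes, only two of
the four constants involved are nonzero and the relation is a direct sign computation;
otherwise it is \<open>eps_addition_formula\<close>.
\<close>

context Vq_params
begin

lemma struct_const_rec_u0:
  assumes "b + c + 1 \<le> r - 2"
  shows "- (lam (c + 1) * struct_const (b + c + 1) b (c + 1))
    = - (lam (b + c + 1) * struct_const (b + c) b c)"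
proof -
  have "struct_const (b + c + 1) b (c + 1) = struct_const ((c + 1) + b) (0 + b) (0 + (c + 1))"
    "struct_const (b + c) b c = struct_const (c + b) (0 + b) (0 + c)"
    by (simp_all add: ac_simps)
  then show ?thesis using assms
    by (simp only: struct_const_param) (simp add: eps_prod_Suc power_add ac_simps sign_cancel)
qed

lemma struct_const_rec_v0:
  assumes "a + c + 1 \<le> r - 2"
  shows "struct_const c a (a + c) = struct_const (c + 1) a (a + c + 1)"
proof -
  have "struct_const c a (a + c) = struct_const (c + 0) (a + 0) (a + c)"
    "struct_const (c + 1) a (a + c + 1) = struct_const ((c + 1) + 0) (a + 0) (a + (c + 1))"
    by (simp_all add: ac_simps)
  then show ?thesis using assms
    by (simp only: struct_const_param) (simp add: eps_prod_Suc power_add ac_simps sign_cancel)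
qed

lemma struct_const_rec_z0:
  "- (lam (a + 1) * struct_const b (a + b + 1) (a + 1)) = struct_const (b + 1) (a + b + 1) a"
proof -
  have "struct_const b (a + b + 1) (a + 1) = struct_const (0 + b) ((a + 1) + b) ((a + 1) + 0)"
    "struct_const (b + 1) (a + b + 1) a = struct_const (0 + (b + 1)) (a + (b + 1)) (a + 0)"
    by (simp_all add: ac_simps)
  then show ?thesis
    by (simp only: struct_const_param) (simp add: eps_prod_Suc power_add ac_simps sign_cancel)
qed

text \<open>The interior case factors out a common sign \<open>K\<close>, with \<open>K\<^sup>2 = 1\<close>.\<close>

lemma struct_const_rec_interior:
  assumes "a + b + c + 2 \<le> r - 2"
  shows "struct_const (c + (b + 1)) (a + (b + 1)) (a + c)
      - lam (a + c + 2) * struct_const ((c + 1) + b) ((a + 1) + b) ((a + 1) + (c + 1))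
    = struct_const ((c + 1) + (b + 1)) (a + (b + 1)) (a + (c + 1))
      - lam (b + c + 1) * struct_const (c + b) ((a + 1) + b) ((a + 1) + c)"
proof -
  have "\<epsilon> (c + 1 + (a + 1)) * \<epsilon> (c + 1 + (b + 1)) * (1 + \<epsilon> (a + 1) * \<epsilon> (b + 1) * \<epsilon> (c + 1)
      * \<epsilon> (c + 1 + (a + 1) + (b + 1))) = \<epsilon> (a + 1) * \<epsilon> (b + 1) + \<epsilon> (c + 1) * \<epsilon> (c + 1 + (a + 1) + (b + 1))"
    by (rule eps_addition_formula) (use assms r_ge_3 in auto)
  then have sine: "\<epsilon> (Suc (Suc (a + c))) * \<epsilon> (Suc (Suc (b + c))) * (1 + \<epsilon> (Suc a) * \<epsilon> (Suc b)
      * \<epsilon> (Suc c) * \<epsilon> (Suc (Suc (Suc (a + b + c)))))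
      = \<epsilon> (Suc a) * \<epsilon> (Suc b) + \<epsilon> (Suc c) * \<epsilon> (Suc (Suc (Suc (a + b + c))))"
    by (simp add: ac_simps)
  let ?K = "eps_prod (a + b + c) * eps_prod a * eps_prod b * eps_prod c * eps_prod (b + c)
    * eps_prod (a + b) * eps_prod (a + c) * (-1) ^ b * \<epsilon> (Suc (a + b)) * \<epsilon> (Suc (a + c))
    * \<epsilon> (Suc (b + c)) * \<epsilon> (Suc (a + b + c)) * \<epsilon> (Suc (Suc (a + b + c)))"
  have K: "?K * ?K = 1" by (simp add: ac_simps sign_cancel)
  show ?thesis
    apply (rule mult_cancel_square_one[OF K])
    unfolding struct_const_param using assms
    apply (simp add: eps_prod_Suc power_add ac_simps sign_cancel ring_distribs)
    using sine eps_cases[of r s "Suc a"] eps_cases[of r s "Suc b"] eps_cases[of r s "Suc c"]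
      eps_cases[of r s "Suc (Suc (a + c))"] eps_cases[of r s "Suc (Suc (b + c))"]
      eps_cases[of r s "Suc (Suc (Suc (a + b + c)))"]
    by (elim disjE) (simp_all add: ac_simps)
qed

text \<open>At the top, \<open>a + b + c + 3 = r\<close>, the sine relation is replaced by the reflection \<open>\<epsilon>\<^sub>r\<^sub>-\<^sub>n = \<epsilon>\<^sub>n\<close>.\<close>

lemma struct_const_rec_top:
  assumes "a + b + c + 3 = r"
  shows "struct_const (c + (b + 1)) (a + (b + 1)) (a + c)
    = - (lam (b + c + 1) * struct_const (c + b) ((a + 1) + b) ((a + 1) + c))"
proof -
  let ?K = "eps_prod (a + b + c) * eps_prod a * eps_prod b * eps_prod c * eps_prod (b + c)
    * eps_prod (a + b) * eps_prod (a + c) * (-1) ^ b * \<epsilon> (Suc (a + b)) * \<epsilon> (Suc (a + c))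
    * \<epsilon> (Suc (b + c)) * \<epsilon> (Suc (a + b + c)) * \<epsilon> (Suc (Suc (a + b + c)))"
  have K: "?K * ?K = 1" by (simp add: ac_simps sign_cancel)
  have reflect: "\<epsilon> (Suc (Suc (a + c))) = \<epsilon> (Suc b)" "\<epsilon> (Suc (Suc (b + c))) = \<epsilon> (Suc a)"
  proof -
    have "r - Suc b = Suc (Suc (a + c))" "r - Suc a = Suc (Suc (b + c))" using assms by simp_all
    then show "\<epsilon> (Suc (Suc (a + c))) = \<epsilon> (Suc b)" "\<epsilon> (Suc (Suc (b + c))) = \<epsilon> (Suc a)"
      using eps_reflect[of "Suc b"] eps_reflect[of "Suc a"] assms by simp_all
  qed
  show ?thesis
    apply (rule mult_cancel_square_one[OF K])
    unfolding struct_const_param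
    using assms reflect by (simp add: eps_prod_Suc power_add ac_simps sign_cancel)
qed

lemma struct_const_rec_positive:
  "struct_const (c + (b + 1)) (a + (b + 1)) (a + c)
      - lam (a + c + 2) * struct_const ((c + 1) + b) ((a + 1) + b) ((a + 1) + (c + 1))
    = struct_const ((c + 1) + (b + 1)) (a + (b + 1)) (a + (c + 1))
      - lam (b + c + 1) * struct_const (c + b) ((a + 1) + b) ((a + 1) + c)"
proof -
  consider "a + b + c + 2 \<le> r - 2" | "a + b + c + 3 = r" | "a + b + c + 3 > r" by linarith
  then show ?thesis
  proof cases
    case 1
    then show ?thesis by (rule struct_const_rec_interior)
  next
    case 2
    then show ?thesis using struct_const_rec_top[OF 2]
      struct_const_param_eq_0[of "a + 1" "c + 1" b] struct_const_param_eq_0[of a "c + 1" "b + 1"]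
      by (simp add: ac_simps)
  next
    case 3
    then show ?thesis
      using struct_const_param_eq_0[of "a + 1" "c + 1" b] struct_const_param_eq_0[of a "c + 1" "b + 1"]
        struct_const_param_eq_0[of a c "b + 1"] struct_const_param_eq_0[of "a + 1" c b]
      by (simp add: ac_simps)
  qed
qed

lemma struct_const_rec_param:
  assumes uvz: "n + 1 = z + v" "j + 1 = u + v" "m + 1 = z + u"
    and "1 \<le> n" "n \<le> r - 2" "m \<le> r - 2"
  shows "(if 1 \<le> m then struct_const n j (m - 1) else 0) - lam (Suc m) * struct_const n j (Suc m)
    = struct_const (Suc n) j m - lam n * struct_const (n - 1) j m"
proof -
  consider "u = 0" | "v = 0" | "z = 0" | "1 \<le> u" "1 \<le> v" "1 \<le> z" by linarith
  then show ?thesis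
  proof cases
    case 1
    define b c where "b = v - 1" and "c = z - 1"
    have "j = b" "m = c" "n = b + c + 1" using uvz 1 \<open>1 \<le> n\<close> unfolding b_def c_def by linarith+
    then show ?thesis using struct_const_rec_u0[of b c] assms
      by (simp add: struct_const_eq_0_triangle ac_simps)
  next
    case 2
    define a c where "a = u - 1" and "c = z - 1"
    have "j = a" "n = c" "m = a + c + 1" using uvz 2 \<open>1 \<le> n\<close> unfolding a_def c_def by linarith+
    then show ?thesis using struct_const_rec_v0[of a c] assms
      by (simp add: struct_const_eq_0_triangle ac_simps)
  next
    case 3
    define a b where "a = u - 1" and "b = v - 1"
    have "m = a" "n = b" "j = a + b + 1" using uvz 3 \<open>1 \<le> n\<close> unfolding a_def b_def by linarith+
    then show ?thesis using struct_const_rec_z0[of a b]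
      by (simp add: struct_const_eq_0_triangle ac_simps)
  next
    case 4
    define a b c where "a = u - 1" and "b = v - 1" and "c = z - 1"
    have "n = b + c + 1" "j = a + b + 1" "m = a + c + 1"
      using uvz 4 unfolding a_def b_def c_def by linarith+
    then show ?thesis using struct_const_rec_positive[where a = a and b = b and c = c]
      by (simp add: ac_simps)
  qed
qed

lemma struct_const_rec:
  assumes "1 \<le> n" "n \<le> r - 2" "m \<le> r - 2"
  shows "(if 1 \<le> m then struct_const n j (m - 1) else 0) - lam (Suc m) * struct_const n j (Suc m)
    = struct_const (Suc n) j m - lam n * struct_const (n - 1) j m"
proof (cases "even (n + j + m)")
  case True
  then show ?thesis using assms by (simp add: struct_const_eq_0_odd)
next
  case False
  then obtain p where p: "n + j + m + 1 = 2 * p" by (metis evenE add.commute plus_1_eq_Suc even_Suc)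
  show ?thesis
  proof (cases "p < n \<or> p < m \<or> p < j")
    case True
    then show ?thesis
      using p assms by (elim disjE) (simp_all add: struct_const_eq_0_triangle)
  next
    case False
    then show ?thesis
      using p assms by (intro struct_const_rec_param[of n "p - j" "p - m" j "p - n" m]) linarith+
  qed
qed

end

section \<open>Multiplication by basis vectors\<close>

lemma omega_swap: "omega r s i j k = omega r s j i k"
proof -
  have "admissible r i j k = admissible r j i k" unfolding admissible_def by auto
  moreover have "theta r s i j k = theta r s j i k" unfolding theta_def Let_def by (simp add: ac_simps)
  ultimately show ?thesis unfolding omega_def by simp
qed

lemma vmult_comm: "vmult r s x y = vmult r s y x"
proof
  fix k
  have "(\<Sum>i\<le>r - 2. \<Sum>j\<le>r - 2. x i * y j * omega r s i j k)
      = (\<Sum>j\<le>r - 2. \<Sum>i\<le>r - 2. x i * y j * omega r s i j k)"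
    by (rule sum.swap)
  also have "\<dots> = (\<Sum>i\<le>r - 2. \<Sum>j\<le>r - 2. y i * x j * omega r s i j k)"
    by (simp add: omega_swap[of r s _ _ k] ac_simps)
  finally show "vmult r s x y k = vmult r s y x k" unfolding vmult_def by simp
qed

context Vq_params
begin

lemma vmult_basis_vadd: "vmult r s (basis n) (vadd y z) = vadd (vmult r s (basis n) y) (vmult r s (basis n) z)"
  by (rule ext) (simp add: vmult_basis vadd_def ring_distribs sum.distrib)

lemma vmult_basis_vscale: "vmult r s (basis n) (vscale c y) = vscale c (vmult r s (basis n) y)"
  by (rule ext) (simp add: vmult_basis vscale_def sum_distrib_left mult.assoc)

lemma vmult_basis_zero: "vmult r s (basis n) (\<lambda>_. 0) = (\<lambda>_. 0)"
  by (rule ext) (simp add: vmult_basis)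

lemma vmult_basis_cong: "(\<And>k. k \<le> r - 2 \<Longrightarrow> y k = y' k) \<Longrightarrow> vmult r s (basis n) y = vmult r s (basis n) y'"
  by (rule ext) (simp add: vmult_basis)

lemma vmult_basis_outside: "r - 2 < k \<Longrightarrow> vmult r s (basis n) y k = 0"
  by (simp add: vmult_basis)

lemma vmult_basis_large: "r - 2 < n \<Longrightarrow> vmult r s (basis n) y = (\<lambda>_. 0)"
  by (rule ext) (simp add: vmult_basis struct_const_eq_0_large)

lemma vmult_basis_0: "vmult r s (basis 0) y k = (if k \<le> r - 2 then y k else 0)"
proof -
  have "(\<Sum>j\<le>r - 2. y j * of_int (struct_const 0 j k)) = (\<Sum>j\<le>r - 2. if j = k \<and> k \<le> r - 2 then y j else 0)"
    by (rule sum.cong) (auto simp: struct_const_0_left)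
  then show ?thesis unfolding vmult_basis by (cases "k \<le> r - 2") simp_all
qed

lemma vmult_basis_basis_0:
  assumes "n \<le> r - 2"
  shows "vmult r s (basis n) (basis 0) = basis n"
proof -
  have "vmult r s (basis n) (basis 0) = vmult r s (basis 0) (basis n)" by (rule vmult_comm)
  also have "\<dots> = basis n"
    using assms by (intro ext) (simp add: vmult_basis_0, simp add: basis_def)
  finally show ?thesis .
qed

lemma vmult_basis_self:
  assumes "n \<le> r - 2"
  shows "vmult r s (basis n) (basis n) t = (if t \<le> r - 2 then of_int (struct_const n n t) else 0)"
proof -
  have "(\<Sum>j\<le>r - 2. basis n j * of_int (struct_const n j t)) = (\<Sum>j\<le>r - 2. if j = n then of_int (struct_const n j t) else 0)"
    by (rule sum.cong) (auto simp: basis_def)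
  then show ?thesis using assms by (simp add: vmult_basis)
qed

lemma vmult_basis_1: "vmult r s (basis 1) y m = (if m \<le> r - 2 then (if 1 \<le> m then y (m - 1) else 0)
   - of_int (lam (Suc m)) * (if Suc m \<le> r - 2 then y (Suc m) else 0) else 0)"
proof (cases "m \<le> r - 2")
  case True
  have "(\<Sum>j\<le>r - 2. y j * of_int (struct_const 1 j m))
      = (\<Sum>j\<le>r - 2. (if j = m - 1 then (if 1 \<le> m then y j else 0) else 0)
           + (if j = Suc m then - of_int (lam (Suc m)) * y j else 0))"
  proof (rule sum.cong)
    fix j
    assume "j \<in> {..r - 2}"
    then have "j \<le> r - 2" by simp
    then show "y j * of_int (struct_const 1 j m) = (if j = m - 1 then (if 1 \<le> m then y j else 0) else 0)
        + (if j = Suc m then - of_int (lam (Suc m)) * y j else 0)"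
      unfolding struct_const_1_left[OF True \<open>j \<le> r - 2\<close>] by auto
  qed simp
  also have "\<dots> = (if 1 \<le> m then y (m - 1) else 0) - of_int (lam (Suc m)) * (if Suc m \<le> r - 2 then y (Suc m) else 0)"
    using True by (simp add: sum.distrib) linarith
  finally show ?thesis using True by (simp add: vmult_basis)
qed (simp add: vmult_basis)

lemma vmult_basis_Suc_Suc:
  assumes "Suc n \<le> r - 2"
  shows "vmult r s (basis (Suc (Suc n))) y = vadd (vmult r s (basis 1) (vmult r s (basis (Suc n)) y))
     (vscale (of_int (lam (Suc n))) (vmult r s (basis n) y))"
proof
  fix m
  show "vmult r s (basis (Suc (Suc n))) y m = vadd (vmult r s (basis 1) (vmult r s (basis (Suc n)) y))
     (vscale (of_int (lam (Suc n))) (vmult r s (basis n) y)) m"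
  proof (cases "m \<le> r - 2")
    case True
    have "struct_const (Suc (Suc n)) j m = (if 1 \<le> m then struct_const (Suc n) j (m - 1) else 0)
        - lam (Suc m) * struct_const (Suc n) j (Suc m) + lam (Suc n) * struct_const n j m" for j
      using struct_const_rec[of "Suc n" m j] assms True by simp
    then have rec: "y j * of_int (struct_const (Suc (Suc n)) j m)
        = (if 1 \<le> m then y j * of_int (struct_const (Suc n) j (m - 1)) else 0)
          - of_int (lam (Suc m)) * (y j * of_int (struct_const (Suc n) j (Suc m)))
          + of_int (lam (Suc n)) * (y j * of_int (struct_const n j m))" for j
      by (cases "1 \<le> m") (simp_all add: ring_distribs)
    have "(if Suc m \<le> r - 2 then vmult r s (basis (Suc n)) y (Suc m) else 0)
        = (\<Sum>j\<le>r - 2. y j * of_int (struct_const (Suc n) j (Suc m)))"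
      by (simp add: vmult_basis struct_const_eq_0_large)
    moreover have "(if 1 \<le> m then vmult r s (basis (Suc n)) y (m - 1) else 0)
        = (\<Sum>j\<le>r - 2. (if 1 \<le> m then y j * of_int (struct_const (Suc n) j (m - 1)) else 0))"
      using True by (simp add: vmult_basis)
    ultimately show ?thesis
      using True unfolding vadd_def vscale_def vmult_basis_1
      by (simp add: vmult_basis rec sum.distrib sum_subtractf sum_distrib_left)
  qed (simp add: vadd_def vscale_def vmult_basis vmult_basis_1)
qed

lemma vmult_basis_basis_1_commute:
  "vmult r s (basis n) (vmult r s (basis 1) y) = vmult r s (basis 1) (vmult r s (basis n) y)"
proof (induction n rule: less_induct)
  case (less n)
  consider "n = 0" | "n = 1" | k where "n = Suc (Suc k)" by (cases n; cases "n - 1") auto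
  then show ?case
  proof cases
    case 1
    have "vmult r s (basis 0) (vmult r s (basis 1) y) = vmult r s (basis 1) y"
      by (rule ext) (simp add: vmult_basis_0 vmult_basis_outside)
    moreover have "vmult r s (basis 1) (vmult r s (basis 0) y) = vmult r s (basis 1) y"
      by (rule vmult_basis_cong) (simp add: vmult_basis_0)
    ultimately show ?thesis using 1 by simp
  next
    case (3 k)
    show ?thesis
    proof (cases "Suc k \<le> r - 2")
      case True
      then show ?thesis using 3 less[of k] less[of "Suc k"]
        by (simp add: vmult_basis_Suc_Suc vmult_basis_vadd vmult_basis_vscale)
    qed (use 3 in \<open>simp add: vmult_basis_large vmult_basis_zero\<close>)
  qed simp
qed

end

section \<open>Polynomials evaluated at \<open>e\<^sub>1\<close>\<close>

lemma peval_degree_le: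
  assumes "degree p \<le> K"
  shows "peval r s p x t = (\<Sum>k\<le>K. of_int (coeff p k) * vpow r s x k t)"
  unfolding peval_def vsum_def vscale_def
  by (rule sum.mono_neutral_left) (use assms in \<open>auto simp: coeff_eq_0\<close>)

lemma peval_add: "peval r s (p + q) x = vadd (peval r s p x) (peval r s q x)"
proof
  fix t
  let ?K = "max (degree p) (degree q)"
  have "peval r s p x t = (\<Sum>k\<le>?K. of_int (coeff p k) * vpow r s x k t)"
    "peval r s q x t = (\<Sum>k\<le>?K. of_int (coeff q k) * vpow r s x k t)"
    by (rule peval_degree_le, simp)+
  then show "peval r s (p + q) x t = vadd (peval r s p x) (peval r s q x) t"
    unfolding vadd_def peval_degree_le[OF degree_add_le_max]
    by (simp add: ring_distribs sum.distrib)
qed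

lemma peval_smult: "peval r s (smult c p) x = vscale (of_int c) (peval r s p x)"
proof
  fix t
  have "peval r s p x t = (\<Sum>k\<le>degree p. of_int (coeff p k) * vpow r s x k t)"
    by (rule peval_degree_le) simp
  then show "peval r s (smult c p) x t = vscale (of_int c) (peval r s p x) t"
    unfolding vscale_def peval_degree_le[OF degree_smult_le]
    by (simp add: sum_distrib_left mult.assoc)
qed

lemma peval_0: "peval r s 0 x = (\<lambda>_. 0)"
  unfolding peval_def vsum_def vscale_def by simp

lemma peval_1: "peval r s 1 x = basis 0"
  unfolding peval_def vsum_def vscale_def by (rule ext) simp

lemma vmult_sum_right:
  "finite A \<Longrightarrow> vmult r s x (\<lambda>k. \<Sum>i\<in>A. f i * v i k) = (\<lambda>k. \<Sum>i\<in>A. f i * vmult r s x (v i) k)"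
  by (rule ext) (simp add: vmult_def sum_distrib_left sum_distrib_right sum_divide_distrib
      mult.assoc mult.left_commute sum.swap[of _ A])

lemma peval_pCons_0: "peval r s (pCons 0 p) x = vmult r s x (peval r s p x)"
proof
  fix t
  have "peval r s (pCons 0 p) x t = (\<Sum>k\<le>Suc (degree p). of_int (coeff (pCons 0 p) k) * vpow r s x k t)"
    by (rule peval_degree_le) simp
  also have "\<dots> = (\<Sum>k\<le>degree p. of_int (coeff p k) * vmult r s x (vpow r s x k) t)"
    by (subst sum.atMost_Suc_shift) simp
  also have "\<dots> = vmult r s x (\<lambda>t. \<Sum>k\<le>degree p. of_int (coeff p k) * vpow r s x k t) t"
    by (simp add: vmult_sum_right)
  also have "(\<lambda>t. \<Sum>k\<le>degree p. of_int (coeff p k) * vpow r s x k t) = peval r s p x"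
    by (rule ext, rule peval_degree_le[symmetric]) simp
  finally show "peval r s (pCons 0 p) x t = vmult r s x (peval r s p x) t" .
qed

context Vq_params
begin

lemma peval_Ppoly: "n \<le> r - 2 \<Longrightarrow> peval r s (Ppoly r s n) (basis 1) = basis n"
proof (induction n rule: less_induct)
  case (less n)
  consider "n = 0" | "n = 1" | k where "n = Suc (Suc k)" by (cases n; cases "n - 1") auto
  then show ?case
  proof cases
    case 1
    then show ?thesis by (simp add: peval_1)
  next
    case 2
    have "Ppoly r s 1 = pCons 0 1" by simp
    then show ?thesis
      using 2 less.prems by (simp only: peval_pCons_0 peval_1 vmult_basis_basis_0)
  next
    case (3 k)
    then have "vmult r s (basis (Suc (Suc k))) (basis 0) = basis (Suc (Suc k))"
      using less.prems by (intro vmult_basis_basis_0) simp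
    then show ?thesis
      using 3 less less.prems vmult_basis_Suc_Suc[of k "basis 0"]
      by (simp add: peval_add peval_smult peval_pCons_0 vmult_basis_basis_0)
  qed
qed

definition dP :: "nat \<Rightarrow> nat \<Rightarrow> rat" where
  "dP n = peval r s (pderiv (Ppoly r s n)) (basis 1)"

lemma dP_0: "dP 0 = (\<lambda>_. 0)"
  unfolding dP_def by (simp add: peval_0)

lemma dP_1: "dP (Suc 0) = basis 0"
  unfolding dP_def by (simp add: peval_1 pderiv_pCons pCons_one)

lemma dP_Suc_Suc: "dP (Suc (Suc n)) = vadd (vadd (peval r s (Ppoly r s (Suc n)) (basis 1))
    (vmult r s (basis 1) (dP (Suc n)))) (vscale (of_int (lam (Suc n))) (dP n))"
proof -
  have "pderiv (Ppoly r s (Suc (Suc n))) = Ppoly r s (Suc n) + pCons 0 (pderiv (Ppoly r s (Suc n)))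
     + smult (lam (Suc n)) (pderiv (Ppoly r s n))"
    by (simp add: pderiv_mult pderiv_add pderiv_smult pderiv_pCons)
  then show ?thesis unfolding dP_def by (simp add: peval_add peval_smult peval_pCons_0)
qed

end

section \<open>The element \<open>\<Omega>\<close>\<close>

lemma eta_Suc: "eta r s n = - (eta r s (Suc n) * of_int (eps r s (Suc n) * eps r s (Suc (Suc n))))"
proof -
  have "eta r s (Suc n) * of_int (eps r s (Suc n) * eps r s (Suc (Suc n)))
      = (-1) ^ Suc n * of_int (eps r s (Suc n) * (eps r s (Suc (Suc n)) * eps r s (Suc (Suc n))))"
    unfolding eta_def by (simp add: ac_simps)
  then show ?thesis unfolding eta_def by (simp add: eps_mult_self)
qed

lemma Omega_apply: "Omega r s t = (\<Sum>k\<le>r - 2. eta r s k * vmult r s (basis k) (basis k) t)"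
  unfolding Omega_def vsum_def vscale_def eta_def by (simp add: atLeast0AtMost)

context Vq_params
begin

lemma eta_r_minus_2: "eta r s (r - 2) = -1"
proof -
  have "r - 2 + 1 = r - 1" "odd (r - 2)" using odd_r r_ge_3 by simp_all
  then show ?thesis unfolding eta_def using eps_r_minus_1 by simp
qed

lemma sum_eta_basis_square:
  "n \<le> r - 2 \<Longrightarrow> (\<Sum>k\<le>n. eta r s k * vmult r s (basis k) (basis k) t)
     = eta r s n * (vmult r s (basis n) (dP (Suc n)) t - vmult r s (basis (Suc n)) (dP n) t)"
proof (induction n)
  case 0
  show ?case by (simp add: dP_0 dP_1 vmult_basis_zero)
next
  case (Suc n)
  then have n: "Suc n \<le> r - 2" by simp
  have IH: "(\<Sum>k\<le>n. eta r s k * vmult r s (basis k) (basis k) t)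
      = eta r s n * (vmult r s (basis n) (dP (Suc n)) t - vmult r s (basis (Suc n)) (dP n) t)"
    using Suc by simp
  have e1: "vmult r s (basis (Suc n)) (dP (Suc (Suc n))) t = vmult r s (basis (Suc n)) (basis (Suc n)) t
     + vmult r s (basis 1) (vmult r s (basis (Suc n)) (dP (Suc n))) t
     + of_int (lam (Suc n)) * vmult r s (basis (Suc n)) (dP n) t"
    unfolding dP_Suc_Suc vmult_basis_vadd vmult_basis_vscale vmult_basis_basis_1_commute peval_Ppoly[OF n]
    by (simp add: vadd_def vscale_def)
  have e2: "vmult r s (basis (Suc (Suc n))) (dP (Suc n)) t =
     vmult r s (basis 1) (vmult r s (basis (Suc n)) (dP (Suc n))) t
     + of_int (lam (Suc n)) * vmult r s (basis n) (dP (Suc n)) t"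
    unfolding vmult_basis_Suc_Suc[OF n] by (simp add: vadd_def vscale_def)
  show ?case
    unfolding sum.atMost_Suc IH e1 e2 eta_Suc[of r s n] by (simp add: algebra_simps)
qed

lemma Omega_eq_minus_iota_dP:
  "Omega r s = vscale (-1) (vmult r s (basis (r - 2)) (peval r s (pderiv (Ppoly r s (r - 1))) (basis 1)))"
proof
  fix t
  have "Suc (r - 2) = r - 1" using r_ge_3 by simp
  then have "Omega r s t = - vmult r s (basis (r - 2)) (dP (r - 1)) t"
    unfolding Omega_apply using sum_eta_basis_square[of "r - 2" t]
    by (simp add: eta_r_minus_2 vmult_basis_large)
  then show "Omega r s t = vscale (-1) (vmult r s (basis (r - 2)) (peval r s (pderiv (Ppoly r s (r - 1))) (basis 1))) t"
    unfolding vscale_def dP_def by simp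
qed

lemma Omega_eq_minus_dP_P:
  "Omega r s = vscale (-1) (vmult r s (peval r s (pderiv (Ppoly r s (r - 1))) (basis 1))
     (peval r s (Ppoly r s (r - 2)) (basis 1)))"
proof -
  have "peval r s (Ppoly r s (r - 2)) (basis 1) = basis (r - 2)" by (rule peval_Ppoly) simp
  then show ?thesis unfolding Omega_eq_minus_iota_dP by (simp add: vmult_comm[of r s _ "basis (r - 2)"])
qed

end

section \<open>The reflection \<open>k \<mapsto> r - 2 - k\<close>\<close>

context Vq_params
begin

lemma OmegaPlus_odd: "odd k \<Longrightarrow> OmegaPlus r s k = 0"
proof -
  assume k: "odd k"
  have "vmult r s (basis (2 * n)) (basis (2 * n)) k = 0" for n
  proof (cases "2 * n \<le> r - 2")
    case True
    then show ?thesis using k by (simp add: vmult_basis_self struct_const_eq_0_odd)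
  qed (simp add: vmult_basis_large)
  then show ?thesis unfolding OmegaPlus_def vsum_def vscale_def by simp
qed

lemma eta_struct_const_self_reflect_param:
  assumes sum_c: "a + a + c + c' = r - 2"
  shows "(-1) ^ (a + c') * \<epsilon> (a + c' + 1) * struct_const (a + c') (a + c') (a + a)
    = (-1) ^ (a + c) * \<epsilon> (a + c + 1) * struct_const (a + c) (a + c) (a + a)"
proof -
  have "Suc (a + c') = r - Suc (a + c)" using sum_c r_ge_3 by linarith
  then have eps_c': "\<epsilon> (Suc (a + c')) = \<epsilon> (Suc (a + c))"
    using eps_reflect[of "Suc (a + c)"] sum_c by simp
  have "Suc (a + a + c') = r - 1 - c" using sum_c r_ge_3 by linarith
  then have prod_1: "eps_prod (Suc (a + a + c')) = eps_prod (r - 1) * eps_prod c"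
    using eps_prod_reflect[of c] sum_c by simp
  have "c' = r - 1 - Suc (a + a + c)" and le: "Suc (a + a + c) \<le> r - 1" using sum_c r_ge_3 by linarith+
  then have prod_2: "eps_prod c' = eps_prod (r - 1) * eps_prod (Suc (a + a + c))"
    using eps_prod_reflect[OF le] by simp
  have signs: "(-1::int) ^ (a + c') * (-1) ^ (a + a + c' + (a + a)) = (-1) ^ (a + c) * (-1) ^ (a + a + c + (a + a))"
    by (simp add: minus_one_power_iff flip: power_add)
  have sc: "struct_const (a + c) (a + c) (a + a) = (-1) ^ (a + a + c + (a + a)) * eps_prod (a + a + c + 1)
      * eps_prod a * eps_prod a * eps_prod c * eps_prod (a + c) * eps_prod (a + c) * eps_prod (a + a + 1)"
    using struct_const_param[of a c a] sum_c by simp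
  have sc': "struct_const (a + c') (a + c') (a + a) = (-1) ^ (a + a + c' + (a + a)) * eps_prod (a + a + c' + 1)
      * eps_prod a * eps_prod a * eps_prod c' * eps_prod (a + c') * eps_prod (a + c') * eps_prod (a + a + 1)"
    using struct_const_param[of a c' a] sum_c by simp
  show ?thesis
    unfolding sc sc' using signs eps_c' prod_1 prod_2 by (simp add: ac_simps sign_cancel)
qed

lemma eta_struct_const_self_reflect:
  assumes "n \<le> r - 2" "t \<le> r - 2"
  shows "(-1) ^ (r - 2 - n) * \<epsilon> (r - 2 - n + 1) * struct_const (r - 2 - n) (r - 2 - n) t
    = (-1) ^ n * \<epsilon> (n + 1) * struct_const n n t"
proof (cases "even t")
  case True
  then obtain a where t: "t = a + a" by (metis evenE mult_2)
  define n' where "n' = r - 2 - n"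
  consider "n < a" | "n' < a" | "a \<le> n" "a \<le> n'" by linarith
  then show ?thesis
  proof cases
    case 1
    have "struct_const n n t = 0" using 1 t by (simp add: struct_const_eq_0_triangle)
    moreover have "struct_const n' n' t = 0"
      using 1 t assms unfolding n'_def by (intro struct_const_eq_0) (auto simp: admissible_def)
    ultimately show ?thesis unfolding n'_def by simp
  next
    case 2
    have "struct_const n' n' t = 0" using 2 t by (simp add: struct_const_eq_0_triangle)
    moreover have "struct_const n n t = 0"
      using 2 t assms unfolding n'_def by (intro struct_const_eq_0) (auto simp: admissible_def)
    ultimately show ?thesis unfolding n'_def by simp
  next
    case 3
    define c c' where "c = n - a" and "c' = n' - a"
    have eqs: "r - 2 - n = a + c'" "n = a + c" "a + a + c + c' = r - 2"
      using 3 assms unfolding c_def c'_def n'_def by linarith+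
    show ?thesis
      unfolding eqs(1) unfolding eqs(2) t by (rule eta_struct_const_self_reflect_param[OF eqs(3)])
  qed
qed (simp add: struct_const_eq_0_odd)

lemma eta_vmult_basis_self_reflect:
  assumes "k \<le> r - 2"
  shows "eta r s (r - 2 - k) * vmult r s (basis (r - 2 - k)) (basis (r - 2 - k)) t
    = eta r s k * vmult r s (basis k) (basis k) t"
proof (cases "t \<le> r - 2")
  case True
  have "rat_of_int ((-1) ^ (r - 2 - k) * \<epsilon> (r - 2 - k + 1) * struct_const (r - 2 - k) (r - 2 - k) t)
      = rat_of_int ((-1) ^ k * \<epsilon> (k + 1) * struct_const k k t)"
    using eta_struct_const_self_reflect[OF assms True] by simp
  then show ?thesis using assms True by (simp add: vmult_basis_self eta_def)
qed (simp add: vmult_basis_outside)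

lemma Omega_eq_2_OmegaPlus: "Omega r s = vscale 2 (OmegaPlus r s)"
proof
  fix t
  define h where "h = (r - 3) div 2"
  have r2: "r - 2 = Suc (2 * h)" using odd_r r_ge_3 unfolding h_def by presburger
  let ?f = "\<lambda>k. eta r s k * vmult r s (basis k) (basis k) t"
  have "Omega r s t = (\<Sum>i\<le>h. ?f (2 * i) + ?f (Suc (2 * i)))"
    unfolding Omega_apply r2 by (rule sum.in_pairs_0)
  also have "\<dots> = (\<Sum>i\<le>h. ?f (2 * i)) + (\<Sum>i\<le>h. ?f (2 * (h - i)))"
  proof -
    have "?f (Suc (2 * i)) = ?f (2 * (h - i))" if "i \<le> h" for i
      using eta_vmult_basis_self_reflect[of "Suc (2 * i)" t] r2 that
      by (simp add: right_diff_distrib')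
    then show ?thesis by (simp add: sum.distrib)
  qed
  also have "(\<Sum>i\<le>h. ?f (2 * (h - i))) = (\<Sum>i\<le>h. ?f (2 * i))"
    using sum.nat_diff_reindex[of "\<lambda>i. ?f (2 * i)" "Suc h"] by (simp add: lessThan_Suc_atMost)
  also have "(\<Sum>i\<le>h. ?f (2 * i)) = OmegaPlus r s t"
    unfolding OmegaPlus_def vsum_def vscale_def h_def[symmetric] eta_def by (simp add: atLeast0AtMost)
  finally show "Omega r s t = vscale 2 (OmegaPlus r s) t" unfolding vscale_def by simp
qed

end

theorem mainTheorem6:
  fixes r s :: nat
  assumes "r \<ge> 3" "odd r" "odd s" "coprime r s" "0 < s" "s < r"
  shows "Omega r s = vscale (-1) (vmult r s (peval r s (pderiv (Ppoly r s (r - 1))) (basis 1))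
                                           (peval r s (Ppoly r s (r - 2)) (basis 1)))
     \<and> Omega r s = vscale (-1) (vmult r s (basis (r - 2)) (peval r s (pderiv (Ppoly r s (r - 1))) (basis 1)))
     \<and> Omega r s = vscale 2 (OmegaPlus r s)
     \<and> (\<forall>k. odd k \<longrightarrow> OmegaPlus r s k = 0)"
proof -
  interpret Vq_params r s using assms by unfold_locales auto
  show ?thesis
    using Omega_eq_minus_dP_P Omega_eq_minus_iota_dP Omega_eq_2_OmegaPlus OmegaPlus_odd by blast
qed

end
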